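(* In the setting below with $N_\mathrm{t}=2$, the bound is attained with equality: $$P^{\mathrm{ver}}_{\rho\to\infty}=\frac12\sum_{d=1}^{2}\binom{2}{d}\left[\frac{2}{\pi}\arctan\sqrt{\frac{2-d}{d}}\right]^{2N_\mathrm{r}}=\left(\tfrac12\right)^{2N_\mathrm{r}}.$$ Setting: $N_\mathrm{r}\ge1$, $\mathbf{H}\in\mathbb{C}^{N_\mathrm{r}\times 2}$ has i.i.d. $\mathcal{CN}(0,1)$ entries, and $\check{\mathbf{x}}_1,\dots,\check{\mathbf{x}}_4$ are the elements of $\{-1,+1\}^{2}$. An index $k$ is drawn uniformly from $\{1,\dots,4\}$ independently of $\mathbf{H}$, the receiver observes $\mathbf{y}=\operatorname{sign}(\mathbf{H}\check{\mathbf{x}}_k)$, knows $\check{\mathbf{y}}_m=\operatorname{sign}(\mathbf{H}\check{\mathbf{x}}_m)$ for all $m$, and outputs an index chosen uniformly at random among the minimizers of $m\mapsto\|\mathbf{y}-\check{\mathbf{y}}_m\|_2$; $P^{\mathrm{ver}}_{\rho\to\infty}$ is the probability that the output differs from $k$.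
   Context: For real $a$, $\operatorname{sign}(a)=+1$ if $a\ge0$ and $-1$ if $a<0$; for complex $a$, $\operatorname{sign}(a)=\operatorname{sign}(\Re\{a\})+j\operatorname{sign}(\Im\{a\})$; on vectors it acts element-wise. *)

theory Defs
  imports "HOL-Probability.Probability"
begin

definition rsign :: "real \<Rightarrow> real" where
  "rsign a = (if a \<ge> 0 then 1 else -1)"

definition csign :: "complex \<Rightarrow> complex" where
  "csign z = Complex (rsign (Re z)) (rsign (Im z))"

text \<open>Real Gaussian N(0,1/2) and circularly-symmetric complex Gaussian CN(0,1).\<close>
definition half_normal :: "real measure" where
  "half_normal = density lborel (normal_density 0 (sqrt (1/2)))"

definition CN01 :: "complex measure" where
  "CN01 = distr (half_normal \<Otimes>\<^sub>M half_normal) borel (\<lambda>(a, b). Complex a b)"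

definition channel :: "nat \<Rightarrow> (nat \<times> nat \<Rightarrow> complex) measure" where
  "channel Nr = PiM ({..<Nr} \<times> {..<2}) (\<lambda>_. CN01)"

definition cands :: "(real \<times> real) set" where
  "cands = {-1, 1} \<times> {-1, 1}"

definition rx :: "(nat \<times> nat \<Rightarrow> complex) \<Rightarrow> real \<times> real \<Rightarrow> nat \<Rightarrow> complex" where
  "rx H x = (\<lambda>i. csign (H (i, 0) * complex_of_real (fst x) + H (i, 1) * complex_of_real (snd x)))"

definition vdist :: "nat \<Rightarrow> (nat \<Rightarrow> complex) \<Rightarrow> (nat \<Rightarrow> complex) \<Rightarrow> real" where
  "vdist Nr u v = sqrt (\<Sum>i<Nr. (cmod (u i - v i))\<^sup>2)"

definition minimizers :: "nat \<Rightarrow> (nat \<times> nat \<Rightarrow> complex) \<Rightarrow> (nat \<Rightarrow> complex) \<Rightarrow> (real \<times> real) set" where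
  "minimizers Nr H y = {m \<in> cands. \<forall>m' \<in> cands. vdist Nr y (rx H m) \<le> vdist Nr y (rx H m')}"

definition cond_err :: "nat \<Rightarrow> (nat \<times> nat \<Rightarrow> complex) \<Rightarrow> real" where
  "cond_err Nr H = measure_pmf.prob
     (do { k \<leftarrow> pmf_of_set cands;
           m \<leftarrow> pmf_of_set (minimizers Nr H (rx H k));
           return_pmf (m \<noteq> k) }) {True}"

definition P_ver :: "nat \<Rightarrow> real" where
  "P_ver Nr = (\<integral>H. cond_err Nr H \<partial>channel Nr)"

end

theory Submission
  imports Defs
begin

text \<open>
  Outside a null set of channels no two entries of a row have real (or imaginary) parts of equal
  modulus. For such H, sign(H x) determines x = (a, b) except that flipping b is invisible
  exactly when the first column dominates the second in modulus in every row and in both the real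
  and the imaginary part, and symmetrically for flipping a. These two events are disjoint, and
  the detector errs with probability 1/2 precisely on their union. Each event asks 2 N_r
  independent pairs of i.i.d. N(0, 1/2) variables to satisfy |y| < |x|, which by symmetry has
  probability 1/2 for each pair; hence the error probability is (1/2) ((1/2)^(2 N_r) + (1/2)^(2 N_r)).
\<close>

section \<open>Disjoint pairs of coordinates of an i.i.d.\ product\<close>

lemma measurable_count_space_Pow:
  assumes "finite A" and "\<And>x. x \<in> space M \<Longrightarrow> F x \<subseteq> A"
    and "\<And>a. a \<in> A \<Longrightarrow> {x \<in> space M. a \<in> F x} \<in> sets M"
  shows "F \<in> measurable M (count_space (Pow A))"
proof (subst measurable_count_space_eq2)
  show "finite (Pow A)" using assms(1) by simp
  have "F -` {T} \<inter> space M \<in> sets M" if "T \<subseteq> A" for T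
  proof -
    have "F -` {T} \<inter> space M = {x \<in> space M. \<forall>a\<in>A. a \<in> F x \<longleftrightarrow> a \<in> T}"
      using that assms(2) by blast
    also have "\<dots> \<in> sets M"
    proof (intro sets.sets_Collect_finite_All assms(1))
      fix a assume "a \<in> A"
      then show "{x \<in> space M. a \<in> F x \<longleftrightarrow> a \<in> T} \<in> sets M"
        using assms(3) sets.sets_Collect_neg by (cases "a \<in> T") auto
    qed
    finally show ?thesis .
  qed
  then show "F \<in> space M \<rightarrow> Pow A \<and> (\<forall>T\<in>Pow A. F -` {T} \<inter> space M \<in> sets M)"
    using assms(2) by auto
qed

lemma indep_vars_PiM_components:
  assumes M: "prob_space M" and I: "I \<noteq> {}"
  shows "prob_space.indep_vars (PiM I (\<lambda>_. M)) (\<lambda>_. M) (\<lambda>i x. x i) I"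
proof -
  interpret P: prob_space "PiM I (\<lambda>_. M)" using M by (intro prob_space_PiM)
  have rv: "P.random_variable M (\<lambda>x. x i)" if "i \<in> I" for i
    using that by measurable
  have "distr (PiM I (\<lambda>_. M)) (PiM I (\<lambda>_. M)) (\<lambda>x. \<lambda>i\<in>I. x i) = PiM I (\<lambda>_. M)"
    by (subst distr_cong[OF refl refl, where g="\<lambda>x. x"]) (auto simp: space_PiM restrict_PiE)
  also have "\<dots> = PiM I (\<lambda>i. distr (PiM I (\<lambda>_. M)) M (\<lambda>x. x i))"
    by (intro PiM_cong refl distr_PiM_component[symmetric] M)
  finally show ?thesis
    using P.indep_vars_iff_distr_eq_PiM'[OF I rv] by simp
qed

lemma distr_PiM_pair:
  assumes M: "prob_space M" and pq: "p \<in> I" "q \<in> I" "p \<noteq> q"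
  shows "distr (PiM I (\<lambda>_. M)) (M \<Otimes>\<^sub>M M) (\<lambda>x. (x p, x q)) = M \<Otimes>\<^sub>M M"
proof -
  interpret P: prob_space "PiM I (\<lambda>_. M)" using M by (intro prob_space_PiM)
  have "P.indep_vars (\<lambda>_. M) (\<lambda>i x. x i) I"
    using pq by (intro indep_vars_PiM_components M) auto
  then have "P.indep_var (PiM {p} (\<lambda>_. M)) (\<lambda>x. restrict (\<lambda>i. x i) {p})
      (PiM {q} (\<lambda>_. M)) (\<lambda>x. restrict (\<lambda>i. x i) {q})"
    using pq by (intro P.indep_var_restrict) auto
  then have "P.indep_var M ((\<lambda>y. y p) \<circ> (\<lambda>x. restrict (\<lambda>i. x i) {p}))
      M ((\<lambda>y. y q) \<circ> (\<lambda>x. restrict (\<lambda>i. x i) {q}))"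
    by (rule P.indep_var_compose) measurable
  then have "P.indep_var M (\<lambda>x. x p) M (\<lambda>x. x q)" by (simp add: comp_def)
  then have "distr (PiM I (\<lambda>_. M)) M (\<lambda>x. x p) \<Otimes>\<^sub>M distr (PiM I (\<lambda>_. M)) M (\<lambda>x. x q)
      = distr (PiM I (\<lambda>_. M)) (M \<Otimes>\<^sub>M M) (\<lambda>x. (x p, x q))"
    by (simp add: P.indep_var_distribution_eq)
  then show ?thesis using distr_PiM_component[of I "\<lambda>_. M"] M pq by simp
qed

lemma AE_PiM_pair:
  assumes M: "prob_space M" and pq: "p \<in> I" "q \<in> I" "p \<noteq> q"
    and AE: "AE y in M \<Otimes>\<^sub>M M. P y"
  shows "AE x in PiM I (\<lambda>_. M). P (x p, x q)"
proof (rule AE_distrD[where f="\<lambda>x. (x p, x q)"])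
  show "(\<lambda>x. (x p, x q)) \<in> measurable (PiM I (\<lambda>_. M)) (M \<Otimes>\<^sub>M M)"
    using pq by (intro measurable_Pair measurable_component_singleton)
  show "AE y in distr (PiM I (\<lambda>_. M)) (M \<Otimes>\<^sub>M M) (\<lambda>x. (x p, x q)). P y"
    unfolding distr_PiM_pair[OF M pq] by (rule AE)
qed

lemma indep_vars_PiM_pairs:
  assumes M: "prob_space M" and U: "U \<noteq> {}"
    and pq: "\<And>u. u \<in> U \<Longrightarrow> p u \<in> I \<and> q u \<in> I"
    and disj: "disjoint_family_on (\<lambda>u. {p u, q u}) U"
  shows "prob_space.indep_vars (PiM I (\<lambda>_. M)) (\<lambda>_. M \<Otimes>\<^sub>M M) (\<lambda>u x. (x (p u), x (q u))) U"
proof -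
  interpret P: prob_space "PiM I (\<lambda>_. M)" using M by (intro prob_space_PiM)
  have "I \<noteq> {}" using U pq by blast
  then have "P.indep_vars (\<lambda>_. M) (\<lambda>i x. x i) I"
    by (rule indep_vars_PiM_components[OF M])
  then have "P.indep_vars (\<lambda>u. PiM {p u, q u} (\<lambda>_. M)) (\<lambda>u x. restrict (\<lambda>i. x i) {p u, q u}) U"
    using pq disj by (intro P.indep_vars_restrict) auto
  then have "P.indep_vars (\<lambda>_. M \<Otimes>\<^sub>M M)
      (\<lambda>u x. (\<lambda>y. (y (p u), y (q u))) (restrict (\<lambda>i. x i) {p u, q u})) U"
    by (rule P.indep_vars_compose2) measurable
  then show ?thesis by simp
qed

lemma distr_PiM_pairs:
  assumes M: "prob_space M" and U: "U \<noteq> {}"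
    and pq: "\<And>u. u \<in> U \<Longrightarrow> p u \<in> I \<and> q u \<in> I \<and> p u \<noteq> q u"
    and disj: "disjoint_family_on (\<lambda>u. {p u, q u}) U"
    and f: "f \<in> measurable (M \<Otimes>\<^sub>M M) N"
  shows "distr (PiM I (\<lambda>_. M)) (PiM U (\<lambda>_. N)) (\<lambda>x. \<lambda>u\<in>U. f (x (p u), x (q u)))
    = PiM U (\<lambda>_. distr (M \<Otimes>\<^sub>M M) N f)"
proof -
  interpret P: prob_space "PiM I (\<lambda>_. M)" using M by (intro prob_space_PiM)
  have pair: "(\<lambda>x. (x (p u), x (q u))) \<in> measurable (PiM I (\<lambda>_. M)) (M \<Otimes>\<^sub>M M)" if "u \<in> U" for u
    using pq[OF that] by (intro measurable_Pair measurable_component_singleton) auto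
  have rv: "P.random_variable N (\<lambda>x. f (x (p u), x (q u)))" if "u \<in> U" for u
    using measurable_compose[OF pair[OF that] f] by simp
  have "P.indep_vars (\<lambda>_. M \<Otimes>\<^sub>M M) (\<lambda>u x. (x (p u), x (q u))) U"
    using pq by (intro indep_vars_PiM_pairs M U disj) auto
  then have "P.indep_vars (\<lambda>_. N) (\<lambda>u x. f (x (p u), x (q u))) U"
    by (rule P.indep_vars_compose2[where X="\<lambda>u x. (x (p u), x (q u))"]) (use f in simp)
  then have "distr (PiM I (\<lambda>_. M)) (PiM U (\<lambda>_. N)) (\<lambda>x. \<lambda>u\<in>U. f (x (p u), x (q u)))
      = PiM U (\<lambda>u. distr (PiM I (\<lambda>_. M)) N (\<lambda>x. f (x (p u), x (q u))))"
    using P.indep_vars_iff_distr_eq_PiM'[OF U rv] by simp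
  also have "\<dots> = PiM U (\<lambda>_. distr (M \<Otimes>\<^sub>M M) N f)"
  proof (intro PiM_cong refl)
    fix u assume u: "u \<in> U"
    have "distr (PiM I (\<lambda>_. M)) N (\<lambda>x. f (x (p u), x (q u)))
        = distr (distr (PiM I (\<lambda>_. M)) (M \<Otimes>\<^sub>M M) (\<lambda>x. (x (p u), x (q u)))) N f"
      using distr_distr[OF f pair[OF u]] by (simp add: comp_def)
    also have "\<dots> = distr (M \<Otimes>\<^sub>M M) N f"
      using pq[OF u] by (simp add: distr_PiM_pair[OF M])
    finally show "distr (PiM I (\<lambda>_. M)) N (\<lambda>x. f (x (p u), x (q u))) = distr (M \<Otimes>\<^sub>M M) N f" .
  qed
  finally show ?thesis .
qed

lemma measure_PiM_pairs_in:
  assumes M: "prob_space M" and U: "finite U" "U \<noteq> {}"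
    and pq: "\<And>u. u \<in> U \<Longrightarrow> p u \<in> I \<and> q u \<in> I \<and> p u \<noteq> q u"
    and disj: "disjoint_family_on (\<lambda>u. {p u, q u}) U"
    and S: "S \<in> sets (M \<Otimes>\<^sub>M M)"
  shows "measure (PiM I (\<lambda>_. M)) {x \<in> space (PiM I (\<lambda>_. M)). \<forall>u\<in>U. (x (p u), x (q u)) \<in> S}
    = measure (M \<Otimes>\<^sub>M M) S ^ card U"
proof -
  interpret MM: prob_space "M \<Otimes>\<^sub>M M"
    using M by (simp add: prob_space_pair)
  interpret finite_product_prob_space "\<lambda>_. M \<Otimes>\<^sub>M M" U
    using U by unfold_locales
  let ?pairs = "\<lambda>x. \<lambda>u\<in>U. (x (p u), x (q u))"
  have pairs: "?pairs \<in> measurable (PiM I (\<lambda>_. M)) (PiM U (\<lambda>_. M \<Otimes>\<^sub>M M))"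
    using pq by (intro measurable_restrict measurable_Pair measurable_component_singleton) auto
  have "{x \<in> space (PiM I (\<lambda>_. M)). \<forall>u\<in>U. (x (p u), x (q u)) \<in> S}
      = ?pairs -` (\<Pi>\<^sub>E u\<in>U. S) \<inter> space (PiM I (\<lambda>_. M))"
    by auto
  also have "measure (PiM I (\<lambda>_. M)) \<dots>
      = measure (distr (PiM I (\<lambda>_. M)) (PiM U (\<lambda>_. M \<Otimes>\<^sub>M M)) ?pairs) (\<Pi>\<^sub>E u\<in>U. S)"
    using S U by (intro measure_distr[OF pairs, symmetric] sets_PiM_I_finite) auto
  also have "\<dots> = measure (PiM U (\<lambda>_. M \<Otimes>\<^sub>M M)) (\<Pi>\<^sub>E u\<in>U. S)"
    using distr_PiM_pairs[OF M U(2) pq disj measurable_id] by simp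
  also have "\<dots> = measure (M \<Otimes>\<^sub>M M) S ^ card U"
    using S by (simp add: prob_times)
  finally show ?thesis .
qed

section \<open>Comparing two i.i.d.\ reals in modulus\<close>

definition fst_dominant :: "(real \<times> real) set" where
  "fst_dominant = {p. \<bar>snd p\<bar> < \<bar>fst p\<bar>}"

definition snd_dominant :: "(real \<times> real) set" where
  "snd_dominant = {p. \<bar>fst p\<bar> < \<bar>snd p\<bar>}"

lemma fst_dominant_Int_snd_dominant: "fst_dominant \<inter> snd_dominant = {}"
  by (auto simp: fst_dominant_def snd_dominant_def)

lemma sets_pair_dominant:
  fixes M :: "real measure"
  assumes sets_M[measurable_cong]: "sets M = sets borel"
  shows "fst_dominant \<in> sets (M \<Otimes>\<^sub>M M)" "snd_dominant \<in> sets (M \<Otimes>\<^sub>M M)"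
proof -
  have "{p \<in> space (M \<Otimes>\<^sub>M M). \<bar>snd p\<bar> < \<bar>fst p\<bar>} \<in> sets (M \<Otimes>\<^sub>M M)"
    "{p \<in> space (M \<Otimes>\<^sub>M M). \<bar>fst p\<bar> < \<bar>snd p\<bar>} \<in> sets (M \<Otimes>\<^sub>M M)"
    by measurable
  then show "fst_dominant \<in> sets (M \<Otimes>\<^sub>M M)" "snd_dominant \<in> sets (M \<Otimes>\<^sub>M M)"
    using sets_eq_imp_space_eq[OF sets_M]
    by (simp_all add: space_pair_measure fst_dominant_def snd_dominant_def)
qed

lemma AE_pair_abs_neq:
  fixes M :: "real measure"
  assumes M: "prob_space M" and sets_M[measurable_cong]: "sets M = sets borel"
    and no_atoms: "\<And>a. AE x in M. x \<noteq> a"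
  shows "AE p in M \<Otimes>\<^sub>M M. \<bar>fst p\<bar> \<noteq> \<bar>snd p\<bar>"
proof -
  interpret prob_space M by (rule M)
  interpret pair_prob_space M M ..
  show ?thesis
  proof (rule AE_pair_measure)
    show "{p \<in> space (M \<Otimes>\<^sub>M M). \<bar>fst p\<bar> \<noteq> \<bar>snd p\<bar>} \<in> sets (M \<Otimes>\<^sub>M M)"
      by measurable
    show "AE x in M. AE y in M. \<bar>fst (x, y)\<bar> \<noteq> \<bar>snd (x, y)\<bar>"
    proof (rule AE_I2)
      fix x
      show "AE y in M. \<bar>fst (x, y)\<bar> \<noteq> \<bar>snd (x, y)\<bar>"
        using no_atoms[of x] no_atoms[of "-x"] by eventually_elim (auto simp: abs_eq_iff)
    qed
  qed
qed

lemma measure_pair_dominant: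
  fixes M :: "real measure"
  assumes M: "prob_space M" and sets_M[measurable_cong]: "sets M = sets borel"
    and no_atoms: "\<And>a. AE x in M. x \<noteq> a"
  shows "measure (M \<Otimes>\<^sub>M M) fst_dominant = 1/2" "measure (M \<Otimes>\<^sub>M M) snd_dominant = 1/2"
proof -
  interpret prob_space M by (rule M)
  interpret pair_prob_space M M ..
  have space: "space (M \<Otimes>\<^sub>M M) = UNIV"
    using sets_eq_imp_space_eq[OF sets_M] by (simp add: space_pair_measure)
  note sets = sets_pair_dominant[OF sets_M]
  txt \<open>Swapping the coordinates exchanges the two sets, and their union has full measure.\<close>
  have swap_meas: "(\<lambda>(x, y). (y, x)) \<in> measurable (M \<Otimes>\<^sub>M M) (M \<Otimes>\<^sub>M M)"
    by measurable
  have "measure (M \<Otimes>\<^sub>M M) snd_dominant = measure (distr (M \<Otimes>\<^sub>M M) (M \<Otimes>\<^sub>M M) (\<lambda>(x, y). (y, x))) snd_dominant"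
    by (simp flip: distr_pair_swap)
  also have "\<dots> = measure (M \<Otimes>\<^sub>M M) ((\<lambda>(x, y). (y, x)) -` snd_dominant \<inter> space (M \<Otimes>\<^sub>M M))"
    by (rule measure_distr[OF swap_meas sets(2)])
  also have "(\<lambda>(x, y). (y, x)) -` snd_dominant \<inter> space (M \<Otimes>\<^sub>M M) = fst_dominant"
    by (auto simp: space fst_dominant_def snd_dominant_def)
  finally have swap: "measure (M \<Otimes>\<^sub>M M) snd_dominant = measure (M \<Otimes>\<^sub>M M) fst_dominant" .
  have "AE p in M \<Otimes>\<^sub>M M. p \<in> fst_dominant \<union> snd_dominant"
    using AE_pair_abs_neq[OF M sets_M no_atoms]
    by eventually_elim (auto simp: fst_dominant_def snd_dominant_def)
  then have "1 = measure (M \<Otimes>\<^sub>M M) (fst_dominant \<union> snd_dominant)"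
    using sets by (subst eq_commute, subst prob_eq_1) auto
  also have "\<dots> = measure (M \<Otimes>\<^sub>M M) fst_dominant + measure (M \<Otimes>\<^sub>M M) snd_dominant"
    using sets fst_dominant_Int_snd_dominant by (rule finite_measure_Union)
  finally show "measure (M \<Otimes>\<^sub>M M) fst_dominant = 1/2" "measure (M \<Otimes>\<^sub>M M) snd_dominant = 1/2"
    using swap by simp_all
qed

section \<open>The detector for a generic channel\<close>

lemma rsign_lin_comb_eq_iff:
  fixes x y a b a' b' :: real
  assumes "\<bar>x\<bar> \<noteq> \<bar>y\<bar>" "a \<in> {-1,1}" "b \<in> {-1,1}" "a' \<in> {-1,1}" "b' \<in> {-1,1}"
  shows "rsign (x*a' + y*b') = rsign (x*a + y*b) \<longleftrightarrow>
     (a' = a \<and> b' = b) \<or> (a' = a \<and> b' = -b \<and> \<bar>y\<bar> < \<bar>x\<bar>) \<or> (a' = -a \<and> b' = b \<and> \<bar>x\<bar> < \<bar>y\<bar>)"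
proof -
  have "x \<noteq> y" "x \<noteq> -y" using assms(1) by auto
  then show ?thesis
    using assms(2-5) unfolding rsign_def
    by (simp only: insert_iff empty_iff) (elim disjE; auto simp: abs_if split: if_splits)
qed

abbreviation channel_index :: "nat \<Rightarrow> (nat \<times> nat) set" where
  "channel_index Nr \<equiv> {..<Nr} \<times> {..<2::nat}"

definition cpart :: "nat \<Rightarrow> complex \<Rightarrow> real" where
  "cpart c z = (if c = 0 then Re z else Im z)"

text \<open>
  For u = (i, c), the real (c = 0) or imaginary (c = 1) parts of the two entries of row i, so
  that channel_index indexes these pairs as well as the entries (i, column) themselves.
\<close>

definition row_parts :: "(nat \<times> nat \<Rightarrow> complex) \<Rightarrow> nat \<times> nat \<Rightarrow> real \<times> real" where
  "row_parts H u = (cpart (snd u) (H (fst u, 0)), cpart (snd u) (H (fst u, 1)))"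

definition row_parts_in :: "nat \<Rightarrow> (real \<times> real) set \<Rightarrow> (nat \<times> nat \<Rightarrow> complex) \<Rightarrow> bool" where
  "row_parts_in Nr S H \<longleftrightarrow> (\<forall>u\<in>channel_index Nr. row_parts H u \<in> S)"

lemma rx_eq_iff:
  assumes generic: "\<And>c. c < 2 \<Longrightarrow> row_parts H (i, c) \<in> fst_dominant \<union> snd_dominant"
    and ab: "(a, b) \<in> cands" "(a', b') \<in> cands"
  shows "rx H (a', b') i = rx H (a, b) i \<longleftrightarrow> (\<forall>c<2. (a' = a \<and> b' = b)
     \<or> (a' = a \<and> b' = -b \<and> row_parts H (i, c) \<in> fst_dominant)
     \<or> (a' = -a \<and> b' = b \<and> row_parts H (i, c) \<in> snd_dominant))"
proof -
  have signs: "a \<in> {-1,1}" "b \<in> {-1,1}" "a' \<in> {-1,1}" "b' \<in> {-1,1}"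
    using ab by (auto simp: cands_def)
  have "\<bar>cpart c (H (i, 0))\<bar> \<noteq> \<bar>cpart c (H (i, 1))\<bar>" if "c < 2" for c
    using generic[OF that] by (auto simp: row_parts_def fst_dominant_def snd_dominant_def)
  from this[of 0] this[of 1]
  have "\<bar>Re (H (i, 0))\<bar> \<noteq> \<bar>Re (H (i, 1))\<bar>" "\<bar>Im (H (i, 0))\<bar> \<noteq> \<bar>Im (H (i, 1))\<bar>"
    by (simp_all add: cpart_def)
  note re = rsign_lin_comb_eq_iff[OF this(1) signs] and im = rsign_lin_comb_eq_iff[OF this(2) signs]
  have "(\<forall>c<2::nat. P c) \<longleftrightarrow> P 0 \<and> P 1" for P by (auto simp: less_2_cases_iff)
  then show ?thesis
    unfolding rx_def csign_def complex.inject using re im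
    by (simp add: row_parts_def cpart_def fst_dominant_def snd_dominant_def)
qed

lemma vdist_eq_0_iff: "vdist Nr u v = 0 \<longleftrightarrow> (\<forall>i<Nr. u i = v i)"
  unfolding vdist_def by (auto simp: sum_nonneg_eq_0_iff)

lemma minimizers_rx:
  assumes "k \<in> cands"
  shows "minimizers Nr H (rx H k) = {m \<in> cands. \<forall>i<Nr. rx H m i = rx H k i}"
proof -
  have nonneg: "vdist Nr u v \<ge> 0" for u v by (simp add: vdist_def sum_nonneg)
  have "vdist Nr (rx H k) (rx H k) = 0" by (simp add: vdist_eq_0_iff)
  then have "(\<forall>m'\<in>cands. vdist Nr (rx H k) (rx H m) \<le> vdist Nr (rx H k) (rx H m'))
      \<longleftrightarrow> vdist Nr (rx H k) (rx H m) = 0" for m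
    using assms nonneg by (metis order_antisym)
  then show ?thesis by (auto simp: minimizers_def vdist_eq_0_iff)
qed

lemma minimizers_rx_generic:
  assumes generic: "row_parts_in Nr (fst_dominant \<union> snd_dominant) H" and "Nr \<ge> 1"
    and k: "(a, b) \<in> cands"
  shows "minimizers Nr H (rx H (a, b)) = insert (a, b)
     ((if row_parts_in Nr fst_dominant H then {(a, -b)} else {})
      \<union> (if row_parts_in Nr snd_dominant H then {(-a, b)} else {}))"
proof -
  have signs: "a \<in> {-1,1}" "b \<in> {-1,1}" using k by (auto simp: cands_def)
  then have flips: "a \<noteq> -a" "b \<noteq> -b" by auto
  have row_eq: "(\<forall>i<Nr. rx H (a', b') i = rx H (a, b) i) \<longleftrightarrow> (\<forall>u\<in>channel_index Nr.
     (a' = a \<and> b' = b) \<or> (a' = a \<and> b' = -b \<and> row_parts H u \<in> fst_dominant)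
     \<or> (a' = -a \<and> b' = b \<and> row_parts H u \<in> snd_dominant))"
    if "(a', b') \<in> cands" for a' b'
    using rx_eq_iff[OF _ k that] generic by (auto simp: row_parts_in_def)
  have "(a', b') \<in> minimizers Nr H (rx H (a, b)) \<longleftrightarrow>
        (a', b') = (a, b) \<or> (a', b') = (a, -b) \<and> row_parts_in Nr fst_dominant H
        \<or> (a', b') = (-a, b) \<and> row_parts_in Nr snd_dominant H" for a' b'
  proof (cases "(a', b') \<in> cands")
    case True
    then consider "a' = a" "b' = b" | "a' = a" "b' = -b" | "a' = -a" "b' = b" | "a' = -a" "b' = -b"
      using signs by (auto simp: cands_def)
    then show ?thesis
    proof cases
      case 4
      have "(0, 0) \<in> channel_index Nr" using \<open>Nr \<ge> 1\<close> by simp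
      then have "\<not> (\<forall>i<Nr. rx H (a', b') i = rx H (a, b) i)"
        unfolding row_eq[OF True] using 4 flips by force
      then show ?thesis using 4 flips by (simp add: minimizers_rx[OF k])
    qed (use True flips in \<open>auto simp: minimizers_rx[OF k] row_eq row_parts_in_def\<close>)
  next
    case False
    then show ?thesis using signs by (auto simp: minimizers_def cands_def)
  qed
  then show ?thesis by auto
qed

lemma cond_err_generic:
  assumes generic: "row_parts_in Nr (fst_dominant \<union> snd_dominant) H" and "Nr \<ge> 1"
  shows "cond_err Nr H =
    (of_bool (row_parts_in Nr fst_dominant H) + of_bool (row_parts_in Nr snd_dominant H)) / 2"
    (is "_ = (of_bool ?A + of_bool ?B) / 2")
proof -
  have "(0, 0) \<in> channel_index Nr" using \<open>Nr \<ge> 1\<close> by simp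
  then have exclusive: "\<not> (?A \<and> ?B)"
    using fst_dominant_Int_snd_dominant unfolding row_parts_in_def by blast
  have minimizers_ne: "finite (minimizers Nr H (rx H k))" "minimizers Nr H (rx H k) \<noteq> {}"
    if "k \<in> cands" for k
    using that by (auto simp: minimizers_rx cands_def intro: finite_subset[of _ cands])
  have err_given_k: "measure_pmf.prob (pmf_of_set (minimizers Nr H (rx H k))) {m. m \<noteq> k}
      = (of_bool ?A + of_bool ?B) / 2" if k: "k \<in> cands" for k
  proof -
    obtain a b where ab: "k = (a, b)" by force
    then have "(a, -b) \<noteq> (a, b)" "(-a, b) \<noteq> (a, b)" using k by (auto simp: cands_def)
    then show ?thesis
      using minimizers_rx_generic[OF generic \<open>Nr \<ge> 1\<close>, of a b] k exclusive minimizers_ne[OF k]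
      by (cases ?A; cases ?B) (auto simp: ab measure_pmf_of_set)
  qed
  have "cond_err Nr H = pmf (pmf_of_set cands \<bind>
      (\<lambda>k. map_pmf (\<lambda>m. m \<noteq> k) (pmf_of_set (minimizers Nr H (rx H k))))) True"
    unfolding cond_err_def map_pmf_def by (simp add: measure_pmf_single)
  also have "\<dots> = (\<Sum>k\<in>cands. measure_pmf.prob (pmf_of_set (minimizers Nr H (rx H k))) {m. m \<noteq> k})
      / card cands"
    by (simp add: pmf_bind integral_pmf_of_set pmf_map vimage_def cands_def)
  also have "\<dots> = (of_bool ?A + of_bool ?B) / 2"
    by (simp add: err_given_k cands_def)
  finally show ?thesis .
qed

section \<open>Measurability of the conditional error\<close>

lemma borel_measurable_rsign[measurable]: "rsign \<in> borel_measurable borel"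
  unfolding rsign_def[abs_def] by measurable

lemma borel_measurable_csign[measurable]: "csign \<in> borel_measurable borel"
proof -
  have "csign = (\<lambda>z. complex_of_real (rsign (Re z)) + \<i> * complex_of_real (rsign (Im z)))"
    by (auto simp: fun_eq_iff csign_def Complex_eq)
  then show ?thesis by (rule ssubst) measurable
qed

lemma borel_measurable_vdist_rx[measurable]:
  "(\<lambda>H. vdist Nr (rx H k) (rx H m)) \<in> borel_measurable (PiM (channel_index Nr) (\<lambda>_. borel))"
proof -
  have [measurable]: "(\<lambda>H. rx H x i) \<in> borel_measurable (PiM (channel_index Nr) (\<lambda>_. borel))"
    if "i \<in> {..<Nr}" for i x
  proof -
    have "(i, 0) \<in> channel_index Nr" "(i, 1) \<in> channel_index Nr" using that by auto
    then show ?thesis unfolding rx_def by measurable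
  qed
  show ?thesis unfolding vdist_def by measurable
qed

lemma sets_minimizers_rx:
  "{H \<in> space (PiM (channel_index Nr) (\<lambda>_. borel)). m \<in> minimizers Nr H (rx H k)}
     \<in> sets (PiM (channel_index Nr) (\<lambda>_. borel))"
proof -
  have "{H \<in> space (PiM (channel_index Nr) (\<lambda>_. borel)). m \<in> minimizers Nr H (rx H k)} =
      (if m \<in> cands then (\<Inter>m'\<in>cands. {H \<in> space (PiM (channel_index Nr) (\<lambda>_. borel)).
         vdist Nr (rx H k) (rx H m) \<le> vdist Nr (rx H k) (rx H m')}) else {})"
    unfolding minimizers_def by (auto simp: cands_def)
  also have "\<dots> \<in> sets (PiM (channel_index Nr) (\<lambda>_. borel))"
    by (auto intro!: sets.finite_INT simp: cands_def)
  finally show ?thesis .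
qed

text \<open>
  The conditional error depends on H only through this finite-valued relation, which is how its
  measurability is established.
\<close>

definition tie_relation :: "nat \<Rightarrow> (nat \<times> nat \<Rightarrow> complex) \<Rightarrow> ((real \<times> real) \<times> (real \<times> real)) set" where
  "tie_relation Nr H = {(k, m) \<in> cands \<times> cands. m \<in> minimizers Nr H (rx H k)}"

definition tie_error :: "((real \<times> real) \<times> (real \<times> real)) set \<Rightarrow> real" where
  "tie_error T = measure_pmf.prob
     (do { k \<leftarrow> pmf_of_set cands;
           m \<leftarrow> pmf_of_set {m. (k, m) \<in> T};
           return_pmf (m \<noteq> k) }) {True}"

lemma cond_err_eq_tie_error: "cond_err Nr H = tie_error (tie_relation Nr H)"
proof -
  have "{m. (k, m) \<in> tie_relation Nr H} = minimizers Nr H (rx H k)" if "k \<in> cands" for k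
    using that unfolding tie_relation_def minimizers_def by auto
  then show ?thesis unfolding cond_err_def tie_error_def
    by (intro arg_cong2[where f=measure_pmf.prob] refl bind_pmf_cong) (auto simp: cands_def)
qed

lemma borel_measurable_cond_err:
  "cond_err Nr \<in> borel_measurable (PiM (channel_index Nr) (\<lambda>_. borel))"
proof -
  have "tie_relation Nr \<in> measurable (PiM (channel_index Nr) (\<lambda>_. borel)) (count_space (Pow (cands \<times> cands)))"
  proof (rule measurable_count_space_Pow)
    fix p :: "(real \<times> real) \<times> (real \<times> real)"
    assume "p \<in> cands \<times> cands"
    then show "{H \<in> space (PiM (channel_index Nr) (\<lambda>_. borel)). p \<in> tie_relation Nr H}
        \<in> sets (PiM (channel_index Nr) (\<lambda>_. borel))"
      using sets_minimizers_rx[of Nr "snd p" "fst p"] by (auto simp: tie_relation_def)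
  qed (auto simp: tie_relation_def cands_def)
  from measurable_compose_countable'[where f="\<lambda>T _. tie_error T", OF _ this]
  show ?thesis by (simp add: cond_err_eq_tie_error[abs_def] cands_def countable_finite)
qed

section \<open>The channel as a function of 4 N_r i.i.d.\ real Gaussians\<close>

lemma prob_space_half_normal: "prob_space half_normal"
  unfolding half_normal_def by (rule prob_space_normal_density) simp

lemma sets_half_normal[measurable_cong]: "sets half_normal = sets borel"
  by (simp add: half_normal_def)

lemma AE_half_normal_neq: "AE x in half_normal. x \<noteq> a"
  unfolding half_normal_def using AE_lborel_singleton[of a]
  by (subst AE_density) (auto elim: AE_mp)

definition channel_of_parts :: "nat \<Rightarrow> ((nat \<times> nat) \<times> nat \<Rightarrow> real) \<Rightarrow> nat \<times> nat \<Rightarrow> complex" where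
  "channel_of_parts Nr G = (\<lambda>j\<in>channel_index Nr. Complex (G (j, 0)) (G (j, 1)))"

abbreviation parts_space :: "nat \<Rightarrow> ((nat \<times> nat) \<times> nat \<Rightarrow> real) measure" where
  "parts_space Nr \<equiv> PiM (channel_index Nr \<times> {..<2}) (\<lambda>_. half_normal)"

lemma measurable_channel_of_parts[measurable]:
  "channel_of_parts Nr \<in> measurable (parts_space Nr) (PiM (channel_index Nr) (\<lambda>_. borel))"
  unfolding channel_of_parts_def Complex_eq by measurable

lemma channel_eq_distr_parts:
  assumes "Nr \<ge> 1"
  shows "channel Nr = distr (parts_space Nr) (PiM (channel_index Nr) (\<lambda>_. borel)) (channel_of_parts Nr)"
proof -
  have "(\<lambda>(a, b). Complex a b) \<in> measurable (half_normal \<Otimes>\<^sub>M half_normal) borel"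
    unfolding case_prod_unfold Complex_eq by measurable
  from distr_PiM_pairs[OF prob_space_half_normal _ _ _ this, where p="\<lambda>j. (j, 0)" and q="\<lambda>j. (j, 1)"
      and U="channel_index Nr" and I="channel_index Nr \<times> {..<2::nat}"]
  show ?thesis
    using assms by (auto simp: channel_def CN01_def channel_of_parts_def[abs_def] disjoint_family_on_def lessThan_empty_iff)
qed

lemma row_parts_channel_of_parts:
  assumes "u \<in> channel_index Nr"
  shows "row_parts (channel_of_parts Nr G) u = (G ((fst u, 0), snd u), G ((fst u, 1), snd u))"
  using assms by (auto simp: row_parts_def channel_of_parts_def cpart_def less_2_cases_iff)

definition parts_event :: "nat \<Rightarrow> (real \<times> real) set \<Rightarrow> ((nat \<times> nat) \<times> nat \<Rightarrow> real) set" where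
  "parts_event Nr S = {G \<in> space (parts_space Nr). row_parts_in Nr S (channel_of_parts Nr G)}"

lemma parts_event_eq:
  "parts_event Nr S = {G \<in> space (parts_space Nr).
     \<forall>u\<in>channel_index Nr. (G ((fst u, 0), snd u), G ((fst u, 1), snd u)) \<in> S}"
  by (simp add: parts_event_def row_parts_in_def row_parts_channel_of_parts)

lemma sets_parts_event:
  assumes "S \<in> sets (half_normal \<Otimes>\<^sub>M half_normal)"
  shows "parts_event Nr S \<in> sets (parts_space Nr)"
  unfolding parts_event_eq
proof (intro sets.sets_Collect_finite_All)
  fix u assume "u \<in> channel_index Nr"
  then have "(\<lambda>G. (G ((fst u, 0), snd u), G ((fst u, 1), snd u)))
      \<in> measurable (parts_space Nr) (half_normal \<Otimes>\<^sub>M half_normal)"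
    by (intro measurable_Pair measurable_component_singleton) (auto simp: mem_Times_iff)
  from measurable_sets[OF this assms]
  show "{G \<in> space (parts_space Nr). (G ((fst u, 0), snd u), G ((fst u, 1), snd u)) \<in> S}
      \<in> sets (parts_space Nr)"
    by (simp add: vimage_def Int_def conj_commute)
qed simp

lemma measure_parts_event:
  assumes "Nr \<ge> 1" and S: "S \<in> sets (half_normal \<Otimes>\<^sub>M half_normal)"
  shows "measure (parts_space Nr) (parts_event Nr S) = measure (half_normal \<Otimes>\<^sub>M half_normal) S ^ (2 * Nr)"
proof -
  show ?thesis
    unfolding parts_event_eq using assms
    by (subst measure_PiM_pairs_in[OF prob_space_half_normal _ _ _ _ S])
       (auto simp: disjoint_family_on_def mem_Times_iff lessThan_empty_iff card_cartesian_product
         mult.commute)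
qed

lemma AE_generic_channel_of_parts:
  "AE G in parts_space Nr. row_parts_in Nr (fst_dominant \<union> snd_dominant) (channel_of_parts Nr G)"
proof -
  have "AE G in parts_space Nr. \<forall>u\<in>channel_index Nr.
      \<bar>G ((fst u, 0), snd u)\<bar> \<noteq> \<bar>G ((fst u, 1), snd u)\<bar>"
  proof (rule AE_finite_allI)
    fix u assume "u \<in> channel_index Nr"
    then show "AE G in parts_space Nr. \<bar>G ((fst u, 0), snd u)\<bar> \<noteq> \<bar>G ((fst u, 1), snd u)\<bar>"
      by (intro AE_PiM_pair[OF prob_space_half_normal _ _ _
          AE_pair_abs_neq[OF prob_space_half_normal sets_half_normal AE_half_normal_neq], simplified])
         (auto simp: mem_Times_iff)
  qed simp
  then show ?thesis
    by eventually_elim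
       (auto simp: row_parts_in_def row_parts_channel_of_parts fst_dominant_def snd_dominant_def
         linorder_neq_iff)
qed

lemma P_ver_eq_parts_events:
  assumes "Nr \<ge> 1"
  shows "P_ver Nr = (measure (parts_space Nr) (parts_event Nr fst_dominant)
                    + measure (parts_space Nr) (parts_event Nr snd_dominant)) / 2"
proof -
  interpret prob_space "parts_space Nr" by (intro prob_space_PiM prob_space_half_normal)
  have sets: "parts_event Nr fst_dominant \<in> events" "parts_event Nr snd_dominant \<in> events"
    using sets_pair_dominant[OF sets_half_normal] by (simp_all add: sets_parts_event)
  have "P_ver Nr = (\<integral>G. cond_err Nr (channel_of_parts Nr G) \<partial>parts_space Nr)"
    unfolding P_ver_def channel_eq_distr_parts[OF assms]
    by (rule integral_distr[OF measurable_channel_of_parts borel_measurable_cond_err])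
  also have "\<dots> = (\<integral>G. (indicator (parts_event Nr fst_dominant) G
                       + indicator (parts_event Nr snd_dominant) G) / 2 \<partial>parts_space Nr)"
  proof (rule integral_cong_AE)
    show "AE G in parts_space Nr. cond_err Nr (channel_of_parts Nr G)
        = (indicator (parts_event Nr fst_dominant) G + indicator (parts_event Nr snd_dominant) G) / 2"
      using AE_generic_channel_of_parts AE_space
      by eventually_elim (simp add: cond_err_generic[OF _ assms] parts_event_def indicator_def)
    show "(\<lambda>G. cond_err Nr (channel_of_parts Nr G)) \<in> borel_measurable (parts_space Nr)"
      by (rule measurable_compose[OF measurable_channel_of_parts borel_measurable_cond_err])
  qed (use sets in measurable)
  also have "\<dots> = (measure (parts_space Nr) (parts_event Nr fst_dominant)
                    + measure (parts_space Nr) (parts_event Nr snd_dominant)) / 2"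
    using sets by (simp add: Bochner_Integration.integral_add integrable_real_indicator less_top[symmetric])
  finally show ?thesis .
qed

theorem proposition5:
  fixes Nr :: nat
  assumes "Nr \<ge> 1"
  shows "P_ver Nr = (1/2) * (\<Sum>d\<in>{1..2::nat}. real (2 choose d) *
            ((2 / pi) * arctan (sqrt ((2 - real d) / real d))) ^ (2 * Nr))
       \<and> (1/2) * (\<Sum>d\<in>{1..2::nat}. real (2 choose d) *
            ((2 / pi) * arctan (sqrt ((2 - real d) / real d))) ^ (2 * Nr)) = (1/2) ^ (2 * Nr)"
proof -
  note half_normal = prob_space_half_normal sets_half_normal AE_half_normal_neq
  have "P_ver Nr = (1/2) ^ (2 * Nr)"
    using P_ver_eq_parts_events[OF assms] measure_pair_dominant[OF half_normal]
      measure_parts_event[OF assms sets_pair_dominant(1)[OF sets_half_normal]]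
      measure_parts_event[OF assms sets_pair_dominant(2)[OF sets_half_normal]]
    by simp
  moreover have "(\<Sum>d\<in>{1..2::nat}. real (2 choose d) *
      ((2 / pi) * arctan (sqrt ((2 - real d) / real d))) ^ (2 * Nr)) = 2 * (1/2) ^ (2 * Nr)"
    using assms by (simp add: numeral_2_eq_2)
  ultimately show ?thesis by simp
qed

end
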